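(* Consider the $r$-cGA with parameter $K$ on $r\text{-OneMax}$, with frequencies $p^{(t)}_{i,j}$ at iteration $t$, and let $\Delta_{i,r-1}:=p^{(t+1)}_{i,r-1}-p^{(t)}_{i,r-1}$. If $\frac1K\leq p^{(t)}_{i,r-1}\leq 1-\frac1K$, then, conditional on the frequencies at iteration $t$, \[\mathbb{E}(\Delta_{i,r-1}\mid p^{(t)})\geq \frac{8\,p^{(t)}_{i,r-1}(1-p^{(t)}_{i,r-1})}{9K\left(2\sqrt{3\sum_{j\neq i}p^{(t)}_{j,r-1}(1-p^{(t)}_{j,r-1})}+1\right)}.\]
   Context: Let $n\geq 1$, $r\geq 2$ be integers and $K>0$. The $r$-cGA maximizing $f$ maintains frequencies $p^{(t)}_{i,j}$ ($i\in\{1,\dots,n\}$, $j\in\{0,\dots,r-1\}$), initialized to $1/r$. In iteration $t$ it samples $x,y\in\{0,\dots,r-1\}^n$ independently, each position $i$ independently with $\Pr[x_i=j]=p^{(t)}_{i,j}$; if $f(x)<f(y)$ it swaps $x$ and $y$; then it sets $p^{(t+1)}_{i,j}=p^{(t)}_{i,j}+\frac1K(\mathbf{1}[x_i=j]-\mathbf{1}[y_i=j])$ for all $i,j$, with no margins. Here $f=r\text{-OneMax}$, $r\text{-OneMax}(x)=\sum_{i=1}^n\mathbf{1}[x_i=r-1]$. *)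

theory Defs
  imports "HOL-Probability.Probability"
begin

text \<open>Positions are indexed 0..n-1, values 0..r-1. A frequency state is
  p :: nat => nat => real, p i j = frequency of value j at position i.\<close>

definition r_onemax :: "nat \<Rightarrow> nat \<Rightarrow> (nat \<Rightarrow> nat) \<Rightarrow> nat" where
  "r_onemax r n x = card {i \<in> {..<n}. x i = r - 1}"

definition valid_freqs :: "nat \<Rightarrow> nat \<Rightarrow> (nat \<Rightarrow> nat \<Rightarrow> real) \<Rightarrow> bool" where
  "valid_freqs r n p \<longleftrightarrow> (\<forall>i<n. (\<forall>j<r. p i j \<ge> 0) \<and> (\<Sum>j<r. p i j) = 1)"

definition sample_ind :: "nat \<Rightarrow> nat \<Rightarrow> (nat \<Rightarrow> nat \<Rightarrow> real) \<Rightarrow> (nat \<Rightarrow> nat) pmf" where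
  "sample_ind r n p = Pi_pmf {..<n} 0 (\<lambda>i. embed_pmf (\<lambda>j. if j < r then p i j else 0))"

definition rcga_step :: "nat \<Rightarrow> nat \<Rightarrow> real \<Rightarrow> (nat \<Rightarrow> nat \<Rightarrow> real) \<Rightarrow> (nat \<Rightarrow> nat \<Rightarrow> real) pmf" where
  "rcga_step r n K p =
     do { x \<leftarrow> sample_ind r n p;
          y \<leftarrow> sample_ind r n p;
          let (x', y') = (if r_onemax r n x < r_onemax r n y then (y, x) else (x, y));
          return_pmf (\<lambda>i j. p i j + (1 / K) * ((if x' i = j then 1 else 0) - (if y' i = j then 1 else 0))) }"

end

theory Submission
  imports Defs
begin

(* Write c = r - 1 and q = p i c. The two sampled individuals matter only through their bits
   at position i (independent Bernoulli(q)) and the numbers S, S' of other positions carrying c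
   (i.i.d. with variance V = sum_{j ~= i} p j c (1 - p j c)). If the bits agree the frequency
   does not move; the two outcomes with different bits have the same probability q (1 - q), and
   together they gain at least 2/K whenever S = S'. Hence the drift is at least
   2 q (1 - q) Pr[S = S'] / K = 2 q (1 - q) sum_s Pr[S = s]^2 / K. By Chebyshev, S lies in a
   window of 2 sqrt (3 V) + 1 integers with probability at least 2/3, and Cauchy-Schwarz on that
   window gives sum_s Pr[S = s]^2 >= (2/3)^2 / (2 sqrt (3 V) + 1). *)

lemma card_nat_set_within_le:
  fixes W :: "nat set" and \<mu> u :: real
  assumes "finite W" and "u \<ge> 0" and "\<And>s. s \<in> W \<Longrightarrow> \<bar>real s - \<mu>\<bar> \<le> u"
  shows "real (card W) \<le> 2 * u + 1"
proof (cases "W = {}")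
  case True
  then show ?thesis
    using \<open>u \<ge> 0\<close> by simp
next
  case False
  then have "Min W \<in> W" "Max W \<in> W" "Min W \<le> Max W"
    using assms(1) by auto
  then have "real (Max W) - real (Min W) \<le> 2 * u"
    using assms(3)[of "Min W"] assms(3)[of "Max W"] by linarith
  moreover have "card W \<le> card {Min W..Max W}"
    using assms(1) by (intro card_mono) auto
  ultimately show ?thesis
    using \<open>Min W \<le> Max W\<close> by (simp add: of_nat_diff)
qed

lemma sum_pmf_squared_ge_chebyshev:
  fixes \<sigma> :: "nat pmf"
  defines "V \<equiv> measure_pmf.variance \<sigma> real"
  assumes fin: "finite (set_pmf \<sigma>)" and "u > 0" and "V \<le> u\<^sup>2"
  shows "(1 - V / u\<^sup>2)\<^sup>2 \<le> (2 * u + 1) * (\<Sum>s\<in>set_pmf \<sigma>. (pmf \<sigma> s)\<^sup>2)"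
proof -
  define \<mu> where "\<mu> = measure_pmf.expectation \<sigma> real"
  define W where "W = {s \<in> set_pmf \<sigma>. \<bar>real s - \<mu>\<bar> < u}"
  have finW: "finite W"
    using fin by (simp add: W_def)
  have "measure_pmf.prob \<sigma> {s. u \<le> \<bar>real s - \<mu>\<bar>} \<le> V / u\<^sup>2"
    using measure_pmf.Chebyshev_inequality[where M=\<sigma> and f=real and a=u] \<open>u > 0\<close>
    unfolding V_def \<mu>_def by (simp add: integrable_measure_pmf_finite[OF fin])
  moreover have "measure_pmf.prob \<sigma> {s. u \<le> \<bar>real s - \<mu>\<bar>} = 1 - measure_pmf.prob \<sigma> W"
    by (subst measure_pmf.prob_compl[symmetric]) (auto simp: W_def set_pmf_eq intro!: measure_prob_cong_0)
  ultimately have mass: "1 - V / u\<^sup>2 \<le> (\<Sum>s\<in>W. pmf \<sigma> s)"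
    using finW by (simp add: measure_measure_pmf_finite)
  have cardW: "real (card W) \<le> 2 * u + 1"
    using finW \<open>u > 0\<close> by (intro card_nat_set_within_le[of W _ \<mu>]) (auto simp: W_def)
  have "(1 - V / u\<^sup>2)\<^sup>2 \<le> (\<Sum>s\<in>W. pmf \<sigma> s)\<^sup>2"
    using mass \<open>V \<le> u\<^sup>2\<close> \<open>u > 0\<close> by (intro power_mono) (auto simp: field_simps)
  also have "\<dots> \<le> (\<Sum>s\<in>W. (pmf \<sigma> s)\<^sup>2) * card W"
    by (rule sum_squared_le_sum_of_squares)
  also have "\<dots> \<le> (\<Sum>s\<in>set_pmf \<sigma>. (pmf \<sigma> s)\<^sup>2) * (2 * u + 1)"
    using fin cardW by (intro mult_mono sum_mono2) (auto simp: W_def sum_nonneg)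
  finally show ?thesis
    by (simp add: mult.commute)
qed

lemma sum_pmf_squared_ge_variance:
  fixes \<sigma> :: "nat pmf"
  defines "V \<equiv> measure_pmf.variance \<sigma> real"
  assumes fin: "finite (set_pmf \<sigma>)"
  shows "4 / (9 * (2 * sqrt (3 * V) + 1)) \<le> (\<Sum>s\<in>set_pmf \<sigma>. (pmf \<sigma> s)\<^sup>2)"
proof (cases "V = 0")
  case True
  have "(1 - V / (1/2)\<^sup>2)\<^sup>2 \<le> (2 * (1/2) + 1) * (\<Sum>s\<in>set_pmf \<sigma>. (pmf \<sigma> s)\<^sup>2)"
    using True fin unfolding V_def by (intro sum_pmf_squared_ge_chebyshev) auto
  with True show ?thesis
    by simp
next
  case False
  moreover have "V \<ge> 0"
    unfolding V_def by (rule measure_pmf.variance_positive)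
  ultimately have "V > 0"
    by simp
  define u where "u = sqrt (3 * V)"
  have "u > 0" and u2: "u\<^sup>2 = 3 * V"
    using \<open>V > 0\<close> by (simp_all add: u_def)
  have "(1 - V / u\<^sup>2)\<^sup>2 \<le> (2 * u + 1) * (\<Sum>s\<in>set_pmf \<sigma>. (pmf \<sigma> s)\<^sup>2)"
    using fin \<open>u > 0\<close> u2 \<open>V > 0\<close> unfolding V_def by (intro sum_pmf_squared_ge_chebyshev) auto
  moreover have "(1 - V / u\<^sup>2)\<^sup>2 = 4 / 9"
    using u2 \<open>V > 0\<close> by (simp add: power2_eq_square)
  ultimately have "4 \<le> (\<Sum>s\<in>set_pmf \<sigma>. (pmf \<sigma> s)\<^sup>2) * (9 * (2 * u + 1))"
    by (simp add: algebra_simps)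
  moreover have "9 * (2 * u + 1) > 0"
    using \<open>u > 0\<close> by simp
  ultimately show ?thesis
    by (fold u_def) (simp add: pos_divide_le_eq)
qed

lemma integral_pair_pmf_finite:
  fixes f :: "'a \<times> 'b \<Rightarrow> real"
  assumes "finite (set_pmf A)" and "finite (set_pmf B)"
  shows "measure_pmf.expectation (pair_pmf A B) f =
         measure_pmf.expectation A (\<lambda>a. measure_pmf.expectation B (\<lambda>b. f (a, b)))"
proof -
  have "measure_pmf.expectation (pair_pmf A B) f = (\<Sum>z\<in>set_pmf A \<times> set_pmf B. f z * pmf (pair_pmf A B) z)"
    using assms by (intro integral_measure_pmf_real) auto
  also have "\<dots> = (\<Sum>a\<in>set_pmf A. (\<Sum>b\<in>set_pmf B. f (a, b) * pmf B b) * pmf A a)"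
    by (simp add: sum.cartesian_product' pmf_pair sum_distrib_left sum_distrib_right mult_ac)
  also have "\<dots> = measure_pmf.expectation A (\<lambda>a. measure_pmf.expectation B (\<lambda>b. f (a, b)))"
    using assms by (simp add: integral_measure_pmf_real[of "set_pmf _"])
  finally show ?thesis .
qed

lemma variance_add_pair_pmf:
  fixes g :: "'a \<Rightarrow> real" and h :: "'b \<Rightarrow> real"
  assumes finA: "finite (set_pmf A)" and finB: "finite (set_pmf B)"
  shows "measure_pmf.variance (pair_pmf A B) (\<lambda>z. g (fst z) + h (snd z)) =
         measure_pmf.variance A g + measure_pmf.variance B h"
proof -
  define Eg where "Eg = measure_pmf.expectation A g"
  define Eh where "Eh = measure_pmf.expectation B h"
  have intA: "integrable (measure_pmf A) f" and intB: "integrable (measure_pmf B) f'"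
    for f :: "'a \<Rightarrow> real" and f' :: "'b \<Rightarrow> real"
    using finA finB by (simp_all add: integrable_measure_pmf_finite)
  have "measure_pmf.expectation (pair_pmf A B) (\<lambda>z. g (fst z) + h (snd z)) = Eg + Eh"
    using finA finB by (simp add: integral_pair_pmf_finite intA intB Eg_def Eh_def)
  moreover have "measure_pmf.expectation B (\<lambda>b. h b - Eh) = 0"
    by (simp add: intB Eh_def measure_pmf.prob_space)
  moreover have "measure_pmf.expectation B (\<lambda>b. (g a + h b - (Eg + Eh))\<^sup>2) =
      (g a - Eg)\<^sup>2 + 2 * (g a - Eg) * measure_pmf.expectation B (\<lambda>b. h b - Eh) +
      measure_pmf.variance B h" for a
  proof -
    have "(g a + h b - (Eg + Eh))\<^sup>2 = (g a - Eg)\<^sup>2 + 2 * (g a - Eg) * (h b - Eh) + (h b - Eh)\<^sup>2"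
      for b
      by (simp add: power2_eq_square algebra_simps)
    then show ?thesis
      by (simp add: intB Eh_def measure_pmf.prob_space)
  qed
  ultimately show ?thesis
    using finA finB by (simp add: integral_pair_pmf_finite intA Eg_def)
qed

lemma finite_set_Pi_pmf:
  assumes "finite A" and "\<And>j. j \<in> A \<Longrightarrow> finite (set_pmf (P j))"
  shows "finite (set_pmf (Pi_pmf A d P))"
  using assms by (auto simp: set_Pi_pmf)

lemma variance_sum_Pi_pmf:
  fixes g :: "'a \<Rightarrow> 'b \<Rightarrow> real"
  assumes "finite A" and "\<And>j. j \<in> A \<Longrightarrow> finite (set_pmf (P j))"
  shows "measure_pmf.variance (Pi_pmf A d P) (\<lambda>f. \<Sum>j\<in>A. g j (f j)) =
         (\<Sum>j\<in>A. measure_pmf.variance (P j) (g j))"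
  using assms
proof (induction A rule: finite_induct)
  case empty
  then show ?case
    by simp
next
  case (insert x A)
  have upd: "(\<Sum>j\<in>insert x A. g j ((f(x := y)) j)) = g x y + (\<Sum>j\<in>A. g j (f j))" for f y
    using insert.hyps by (simp, intro sum.cong) auto
  have "measure_pmf.variance (Pi_pmf (insert x A) d P) (\<lambda>f. \<Sum>j\<in>insert x A. g j (f j)) =
        measure_pmf.variance (pair_pmf (P x) (Pi_pmf A d P))
          (\<lambda>z. g x (fst z) + (\<Sum>j\<in>A. g j (snd z j)))"
    by (simp only: Pi_pmf_insert[OF insert.hyps] integral_map_pmf case_prod_beta upd)
  also have "\<dots> = measure_pmf.variance (P x) (g x) +
      measure_pmf.variance (Pi_pmf A d P) (\<lambda>f. \<Sum>j\<in>A. g j (f j))"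
    using insert by (intro variance_add_pair_pmf finite_set_Pi_pmf) auto
  finally show ?case
    using insert by simp
qed

lemma map_pmf_eq_bernoulli_pmf: "map_pmf (\<lambda>a. a = c) M = bernoulli_pmf (pmf M c)"
proof (rule pmf_eqI)
  fix b :: bool
  show "pmf (map_pmf (\<lambda>a. a = c) M) b = pmf (bernoulli_pmf (pmf M c)) b"
  proof (cases b)
    case True
    have "(\<lambda>a. a = c) -` {True} = {c}"
      by auto
    with True show ?thesis
      by (simp add: pmf_map measure_pmf_single pmf_le_1)
  next
    case False
    have "(\<lambda>a. a = c) -` {False} = UNIV - {c}"
      by auto
    with False show ?thesis
      using measure_pmf.prob_compl[of "{c}" M] by (simp add: pmf_map measure_pmf_single pmf_le_1)
  qed
qed

lemma variance_indicator_pmf: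
  "measure_pmf.variance M (\<lambda>a. of_bool (a = c)) = pmf M c * (1 - pmf M c)"
proof -
  have "measure_pmf.variance M (\<lambda>a. of_bool (a = c)) =
        measure_pmf.variance (map_pmf (\<lambda>a. a = c) M) (of_bool :: bool \<Rightarrow> real)"
    by simp
  then show ?thesis
    by (simp add: map_pmf_eq_bernoulli_pmf pmf_le_1 power2_eq_square algebra_simps)
qed

(* An individual enters as (a, s): a tells whether it carries r - 1 at the position under
   consideration, s counts the other positions carrying r - 1. bit_gain x y is the winner's
   indicator minus the loser's after the tournament between x and y. *)
definition bit_gain :: "bool \<times> nat \<Rightarrow> bool \<times> nat \<Rightarrow> real" where
  "bit_gain = (\<lambda>(a, s) (b, t).
     if (of_bool a + s :: nat) < of_bool b + t then of_bool b - of_bool a else of_bool a - of_bool b)"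

lemma bit_gain_swap_ge: "2 * of_bool (s = t) \<le> bit_gain (True, s) (False, t) + bit_gain (False, s) (True, t)"
  by (auto simp: bit_gain_def)

lemma expectation_pair_bernoulli_pmf:
  fixes h :: "bool \<times> 'a \<Rightarrow> real"
  assumes "0 \<le> q" and "q \<le> 1" and "finite (set_pmf \<sigma>)"
  shows "measure_pmf.expectation (pair_pmf (bernoulli_pmf q) \<sigma>) h =
         q * measure_pmf.expectation \<sigma> (\<lambda>s. h (True, s)) +
         (1 - q) * measure_pmf.expectation \<sigma> (\<lambda>s. h (False, s))"
  using assms by (simp add: integral_pair_pmf_finite finite_subset[of _ UNIV])

lemma expectation_bit_gain_ge:
  fixes \<sigma> :: "nat pmf"
  assumes q: "0 \<le> q" "q \<le> 1" and fin: "finite (set_pmf \<sigma>)"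
  defines "D \<equiv> pair_pmf (bernoulli_pmf q) \<sigma>"
  shows "2 * q * (1 - q) * (\<Sum>s\<in>set_pmf \<sigma>. (pmf \<sigma> s)\<^sup>2) \<le>
         measure_pmf.expectation (pair_pmf D D) (\<lambda>(x, y). bit_gain x y)"
proof -
  have finD: "finite (set_pmf D)"
    using fin by (simp add: D_def finite_subset[of _ UNIV])
  have int: "integrable (measure_pmf \<sigma>) f" for f :: "nat \<Rightarrow> real"
    using fin by (simp add: integrable_measure_pmf_finite)
  have same_bit: "bit_gain (a, s) (a, t) = 0" for a s t
    by (simp add: bit_gain_def)
  have single: "measure_pmf.expectation \<sigma> (\<lambda>t. of_bool (s = t)) = pmf \<sigma> s" for s
    by (subst integral_measure_pmf_real[of "{s}"]) auto
  have "2 * q * (1 - q) * (\<Sum>s\<in>set_pmf \<sigma>. (pmf \<sigma> s)\<^sup>2) =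
        q * (1 - q) * measure_pmf.expectation \<sigma> (\<lambda>s. measure_pmf.expectation \<sigma> (\<lambda>t.
          2 * of_bool (s = t)))"
    using fin by (simp add: single integral_measure_pmf_real[of "set_pmf \<sigma>"] power2_eq_square)
  also have "\<dots> \<le> q * (1 - q) * measure_pmf.expectation \<sigma> (\<lambda>s. measure_pmf.expectation \<sigma> (\<lambda>t.
          bit_gain (True, s) (False, t) + bit_gain (False, s) (True, t)))"
    using q by (intro mult_left_mono integral_mono int bit_gain_swap_ge) auto
  also have "\<dots> = measure_pmf.expectation (pair_pmf D D) (\<lambda>(x, y). bit_gain x y)"
    \<comment> \<open>equal bits gain nothing; both outcomes with different bits have probability q (1 - q)\<close>
    using finD q fin unfolding D_def
    by (simp add: integral_pair_pmf_finite expectation_pair_bernoulli_pmf int same_bit algebra_simps)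
  finally show ?thesis .
qed

definition value_pmf :: "nat \<Rightarrow> (nat \<Rightarrow> nat \<Rightarrow> real) \<Rightarrow> nat \<Rightarrow> nat pmf" where
  "value_pmf r p i = embed_pmf (\<lambda>j. if j < r then p i j else 0)"

lemma sample_ind_eq_Pi_pmf: "sample_ind r n p = Pi_pmf {..<n} 0 (value_pmf r p)"
  by (simp add: sample_ind_def value_pmf_def [abs_def])

lemma pmf_value_pmf:
  assumes "valid_freqs r n p" and "i < n"
  shows "pmf (value_pmf r p i) j = (if j < r then p i j else 0)"
proof -
  have row: "\<forall>j<r. 0 \<le> p i j" "(\<Sum>j<r. p i j) = 1"
    using assms unfolding valid_freqs_def by auto
  then have nonneg: "0 \<le> (if j < r then p i j else 0)" for j
    by simp
  have "(\<integral>\<^sup>+j. ennreal (if j < r then p i j else 0) \<partial>count_space UNIV) = (\<Sum>j<r. ennreal (p i j))"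
    by (subst nn_integral_count_space'[of "{..<r}"]) auto
  also have "\<dots> = 1"
    using row by (subst sum_ennreal) auto
  finally show ?thesis
    unfolding value_pmf_def using nonneg by (subst pmf_embed_pmf) auto
qed

lemma finite_set_value_pmf:
  assumes "valid_freqs r n p" and "i < n"
  shows "finite (set_pmf (value_pmf r p i))"
proof (rule finite_subset)
  show "set_pmf (value_pmf r p i) \<subseteq> {..<r}"
    using pmf_value_pmf[OF assms] by (auto simp: set_pmf_eq)
qed simp

definition rest_onemax_pmf :: "nat \<Rightarrow> nat \<Rightarrow> (nat \<Rightarrow> nat \<Rightarrow> real) \<Rightarrow> nat \<Rightarrow> nat pmf" where
  "rest_onemax_pmf r n p i =
     map_pmf (\<lambda>x. card {j \<in> {..<n} - {i}. x j = r - 1}) (Pi_pmf ({..<n} - {i}) 0 (value_pmf r p))"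

lemma finite_set_rest_onemax_pmf:
  assumes "valid_freqs r n p"
  shows "finite (set_pmf (rest_onemax_pmf r n p i))"
  using assms unfolding rest_onemax_pmf_def
  by (auto intro!: finite_set_Pi_pmf finite_set_value_pmf)

lemma variance_rest_onemax_pmf:
  assumes "valid_freqs r n p" and "r \<ge> 1"
  shows "measure_pmf.variance (rest_onemax_pmf r n p i) real =
         (\<Sum>j\<in>{..<n} - {i}. p j (r - 1) * (1 - p j (r - 1)))"
proof -
  have count: "real (card {j \<in> {..<n} - {i}. x j = r - 1}) = (\<Sum>j\<in>{..<n} - {i}. of_bool (x j = r - 1))"
    for x :: "nat \<Rightarrow> nat"
    by (simp add: Int_def)
  have "measure_pmf.variance (rest_onemax_pmf r n p i) real =
        measure_pmf.variance (Pi_pmf ({..<n} - {i}) 0 (value_pmf r p))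
          (\<lambda>x. \<Sum>j\<in>{..<n} - {i}. of_bool (x j = r - 1))"
    by (simp only: rest_onemax_pmf_def integral_map_pmf count)
  also have "\<dots> = (\<Sum>j\<in>{..<n} - {i}. measure_pmf.variance (value_pmf r p j) (\<lambda>v. of_bool (v = r - 1)))"
    using assms by (intro variance_sum_Pi_pmf finite_set_value_pmf) auto
  also have "\<dots> = (\<Sum>j\<in>{..<n} - {i}. p j (r - 1) * (1 - p j (r - 1)))"
    using assms by (intro sum.cong) (auto simp: variance_indicator_pmf pmf_value_pmf)
  finally show ?thesis .
qed

lemma sample_ind_split:
  assumes "i < n"
  shows "sample_ind r n p =
         map_pmf (\<lambda>(a, x). x(i := a)) (pair_pmf (value_pmf r p i) (Pi_pmf ({..<n} - {i}) 0 (value_pmf r p)))"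
proof -
  have "{..<n} = insert i ({..<n} - {i})"
    using assms by auto
  then show ?thesis
    unfolding sample_ind_eq_Pi_pmf by (metis Pi_pmf_insert finite_Diff finite_lessThan Diff_iff singletonI)
qed

lemma r_onemax_fun_upd:
  assumes "i < n"
  shows "r_onemax r n (x(i := a)) = of_bool (a = r - 1) + card {j \<in> {..<n} - {i}. x j = r - 1}"
proof -
  have "{j \<in> {..<n}. (x(i := a)) j = r - 1} =
        (if a = r - 1 then insert i {j \<in> {..<n} - {i}. x j = r - 1} else {j \<in> {..<n} - {i}. x j = r - 1})"
    using assms by auto
  then show ?thesis
    by (simp add: r_onemax_def)
qed

lemma expectation_rcga_step_frequency_change:
  "measure_pmf.expectation (rcga_step r n K p) (\<lambda>q. q i c - p i c) =
   measure_pmf.expectation (pair_pmf (sample_ind r n p) (sample_ind r n p))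
     (\<lambda>(x, y). (if r_onemax r n x < r_onemax r n y then of_bool (y i = c) - of_bool (x i = c)
                else of_bool (x i = c) - of_bool (y i = c)) / K)"
proof -
  define learn :: "(nat \<Rightarrow> nat) \<Rightarrow> (nat \<Rightarrow> nat) \<Rightarrow> nat \<Rightarrow> nat \<Rightarrow> real" where
    "learn x y = (\<lambda>i j. p i j + (1 / K) * ((if x i = j then 1 else 0) - (if y i = j then 1 else 0)))"
    for x y
  have "rcga_step r n K p =
        map_pmf (\<lambda>(x, y). if r_onemax r n x < r_onemax r n y then learn y x else learn x y)
          (pair_pmf (sample_ind r n p) (sample_ind r n p))"
    unfolding rcga_step_def pair_pmf_def learn_def by (auto simp: map_bind_pmf Let_def intro!: bind_pmf_cong)
  then show ?thesis
    by (auto simp: learn_def intro!: Bochner_Integration.integral_cong)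
qed

lemma expectation_rcga_step_eq_bit_gain:
  assumes "valid_freqs r n p" and "i < n" and "r \<ge> 1"
  defines "D \<equiv> pair_pmf (bernoulli_pmf (p i (r - 1))) (rest_onemax_pmf r n p i)"
  shows "measure_pmf.expectation (rcga_step r n K p) (\<lambda>q. q i (r - 1) - p i (r - 1)) =
         measure_pmf.expectation (pair_pmf D D) (\<lambda>(x, y). bit_gain x y) / K"
proof -
  define c where "c = r - 1"
  define T where "T = pair_pmf (value_pmf r p i) (Pi_pmf ({..<n} - {i}) 0 (value_pmf r p))"
  define upd :: "nat \<times> (nat \<Rightarrow> nat) \<Rightarrow> nat \<Rightarrow> nat" where "upd = (\<lambda>(a, x). x(i := a))"
  define summary :: "nat \<times> (nat \<Rightarrow> nat) \<Rightarrow> bool \<times> nat" where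
    "summary = (\<lambda>(a, x). (a = c, card {j \<in> {..<n} - {i}. x j = c}))"
  define change :: "(nat \<Rightarrow> nat) \<times> (nat \<Rightarrow> nat) \<Rightarrow> real" where
    "change = (\<lambda>(x, y). (if r_onemax r n x < r_onemax r n y then of_bool (y i = c) - of_bool (x i = c)
                          else of_bool (x i = c) - of_bool (y i = c)) / K)"
  have sample: "sample_ind r n p = map_pmf upd T"
    unfolding T_def upd_def using \<open>i < n\<close> by (rule sample_ind_split)
  have "map_pmf summary T = pair_pmf (map_pmf (\<lambda>a. a = c) (value_pmf r p i)) (rest_onemax_pmf r n p i)"
    unfolding T_def summary_def rest_onemax_pmf_def c_def by (rule map_pair)
  then have summary: "map_pmf summary T = D"
    using assms by (simp add: D_def c_def map_pmf_eq_bernoulli_pmf pmf_value_pmf)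
  have "change (upd d, upd e) = bit_gain (summary d) (summary e) / K" for d e
    using \<open>i < n\<close>
    by (cases d, cases e) (simp add: change_def upd_def summary_def bit_gain_def r_onemax_fun_upd c_def)
  then have "measure_pmf.expectation (pair_pmf (map_pmf upd T) (map_pmf upd T)) change =
        measure_pmf.expectation (pair_pmf (map_pmf summary T) (map_pmf summary T)) (\<lambda>(x, y). bit_gain x y / K)"
    by (simp flip: map_pair add: case_prod_beta)
  moreover have "measure_pmf.expectation (rcga_step r n K p) (\<lambda>q. q i c - p i c) =
      measure_pmf.expectation (pair_pmf (map_pmf upd T) (map_pmf upd T)) change"
    unfolding change_def sample[symmetric] by (rule expectation_rcga_step_frequency_change)
  ultimately have "measure_pmf.expectation (rcga_step r n K p) (\<lambda>q. q i c - p i c) =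
      measure_pmf.expectation (pair_pmf D D) (\<lambda>(x, y). bit_gain x y / K)"
    by (simp only: summary)
  also have "\<dots> = measure_pmf.expectation (pair_pmf D D) (\<lambda>(x, y). bit_gain x y) / K"
  proof -
    have "(\<lambda>(x, y). bit_gain x y / K) = (\<lambda>z. (case z of (x, y) \<Rightarrow> bit_gain x y) / K)"
      by (simp add: fun_eq_iff split: prod.split)
    then show ?thesis
      by (simp only: integral_divide_zero)
  qed
  finally show ?thesis
    by (simp only: c_def)
qed

theorem lemma3:
  fixes n r :: nat and K :: real and p :: "nat \<Rightarrow> nat \<Rightarrow> real" and i :: nat
  assumes "n \<ge> 1" and "r \<ge> 2" and "K > 0"
    and "valid_freqs r n p"
    and "i < n"
    and "1 / K \<le> p i (r - 1)" and "p i (r - 1) \<le> 1 - 1 / K"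
  shows "measure_pmf.expectation (rcga_step r n K p) (\<lambda>q. q i (r - 1) - p i (r - 1))
         \<ge> 8 * p i (r - 1) * (1 - p i (r - 1)) /
           (9 * K * (2 * sqrt (3 * (\<Sum>j\<in>{..<n} - {i}. p j (r - 1) * (1 - p j (r - 1)))) + 1))"
proof -
  define q where "q = p i (r - 1)"
  define \<sigma> where "\<sigma> = rest_onemax_pmf r n p i"
  define D where "D = pair_pmf (bernoulli_pmf q) \<sigma>"
  define V where "V = (\<Sum>j\<in>{..<n} - {i}. p j (r - 1) * (1 - p j (r - 1)))"
  have "0 < 1 / K"
    using \<open>K > 0\<close> by simp
  then have q: "0 \<le> q" "q \<le> 1"
    using assms(6,7) unfolding q_def by linarith+
  have fin: "finite (set_pmf \<sigma>)"
    using assms(4) unfolding \<sigma>_def by (rule finite_set_rest_onemax_pmf)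
  have "8 * q * (1 - q) / (9 * K * (2 * sqrt (3 * V) + 1)) =
      2 * q * (1 - q) * (4 / (9 * (2 * sqrt (3 * V) + 1))) / K"
    by (simp add: mult_ac)
  also have "\<dots> \<le> 2 * q * (1 - q) * (\<Sum>s\<in>set_pmf \<sigma>. (pmf \<sigma> s)\<^sup>2) / K"
    using sum_pmf_squared_ge_variance[OF fin] variance_rest_onemax_pmf[OF assms(4)] assms(2,3) q
    by (intro divide_right_mono mult_left_mono) (auto simp: \<sigma>_def V_def)
  also have "\<dots> \<le> measure_pmf.expectation (pair_pmf D D) (\<lambda>(x, y). bit_gain x y) / K"
    using expectation_bit_gain_ge[OF q fin] \<open>K > 0\<close> unfolding D_def by (intro divide_right_mono) auto
  also have "\<dots> = measure_pmf.expectation (rcga_step r n K p) (\<lambda>q. q i (r - 1) - p i (r - 1))"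
    using assms(2) unfolding D_def q_def \<sigma>_def
    by (intro expectation_rcga_step_eq_bit_gain[symmetric] assms(4,5)) simp
  finally show ?thesis
    by (simp only: q_def V_def)
qed

end
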